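(* Let $m,n\ge r\ge1$ and let $A\in\mathbb{R}^{m\times r}$, $B\in\mathbb{R}^{n\times r}$ be arbitrary. Then $$\left|\|AB^\top\|_*-\|A\|_F^2\right|\le\sqrt{\|A^\top A-B^\top B\|_*}\;\|A\|_*,$$ and in particular $$\left|\|AB^\top\|_*-\frac{\|A\|_F^2+\|B\|_F^2}{2}\right|\le\sqrt{\|A^\top A-B^\top B\|_*}\;\frac{\|A\|_*+\|B\|_*}{2}.$$
   Context: $\|\cdot\|_F$ is the Frobenius norm and $\|X\|_*=\operatorname{Tr}(\sqrt{XX^\top})$ the nuclear norm (sum of singular values). *)

theory Defs
  imports "HOL-Analysis.Analysis"
begin

definition psd_matrix :: "real^'n^'n \<Rightarrow> bool" where
  "psd_matrix S \<longleftrightarrow> transpose S = S \<and> (\<forall>x. 0 \<le> x \<bullet> (S *v x))"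

definition psd_sqrt :: "real^'n^'n \<Rightarrow> real^'n^'n" where
  "psd_sqrt M = (THE S. psd_matrix S \<and> S ** S = M)"

definition nuclear_norm :: "real^'c^'m \<Rightarrow> real" where
  "nuclear_norm X = trace (psd_sqrt (X ** transpose X))"

definition frob_norm :: "real^'c^'m \<Rightarrow> real" where
  "frob_norm X = sqrt (\<Sum>i\<in>UNIV. \<Sum>j\<in>UNIV. (X $ i $ j)\<^sup>2)"

end

(*
  Put P = A^T A and Q = B^T B. Since (A B^T)(A B^T)^T = A Q A^T = (A sqrt Q)(A sqrt Q)^T and
  (A sqrt P)(A sqrt P)^T = (A A^T)^2, the nuclear norm of A B^T is that of A sqrt Q, while
  ||A||_F^2 = tr (A A^T) is the nuclear norm of A sqrt P. By duality with the operator norm the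
  nuclear norm is subadditive and satisfies ||X D||_* <= ||D||_op ||X||_*, so the two quantities
  differ by at most ||sqrt P - sqrt Q||_op ||A||_*. If (sqrt P - sqrt Q) u = mu u for a unit
  vector u, then mu^2 <= |u^T (P - Q) u| <= ||P - Q||_*; as sqrt P - sqrt Q is symmetric, this
  bounds its operator norm by sqrt ||P - Q||_*. Exchanging A and B, which leaves
  ||A B^T||_* = ||B A^T||_* unchanged, and averaging gives the second inequality.
*)

theory Submission
  imports Defs
begin

lemma quadratic_nonneg_imp_linear_coeff_zero:
  fixes a b :: real
  assumes "\<And>t. 0 \<le> a * t\<^sup>2 + b * t"
  shows "b = 0"
proof (rule ccontr)
  assume "b \<noteq> 0"
  define e where "e = 1 / (\<bar>a\<bar> + 1)"
  have "e > 0" "a * e < 1"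
    unfolding e_def using abs_ge_self[of a] by (auto simp: field_simps)
  have "a * (- b * e)\<^sup>2 + b * (- b * e) = (b\<^sup>2 * e) * (a * e - 1)"
    by (simp add: power2_eq_square algebra_simps)
  also have "\<dots> < 0"
    using \<open>b \<noteq> 0\<close> \<open>e > 0\<close> \<open>a * e < 1\<close> by (intro mult_pos_neg) auto
  finally show False
    using assms[of "- b * e"] by linarith
qed

definition orthonormal_basis :: "'a::euclidean_space set \<Rightarrow> bool" where
  "orthonormal_basis B \<longleftrightarrow> pairwise orthogonal B \<and> (\<forall>v\<in>B. norm v = 1) \<and> span B = UNIV"

lemma orthonormal_basis_finite:
  assumes "orthonormal_basis B"
  shows "finite B"
proof -
  have "0 \<notin> B" using assms unfolding orthonormal_basis_def by force
  then show ?thesis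
    using assms unfolding orthonormal_basis_def
    by (intro independent_imp_finite pairwise_orthogonal_independent) auto
qed

lemma orthonormal_basis_inner:
  "orthonormal_basis B \<Longrightarrow> v \<in> B \<Longrightarrow> w \<in> B \<Longrightarrow> v \<bullet> w = (if v = w then 1 else 0)"
  unfolding orthonormal_basis_def pairwise_def orthogonal_def by (auto simp: norm_eq_1)

lemma orthonormal_basis_norm: "orthonormal_basis B \<Longrightarrow> v \<in> B \<Longrightarrow> norm v = 1"
  unfolding orthonormal_basis_def by blast

lemma orthonormal_basis_sum_expand:
  "orthonormal_basis B \<Longrightarrow> (\<Sum>v\<in>B. (v \<bullet> x) *\<^sub>R v) = x"
  using orthonormal_basis_expand[of B x] orthonormal_basis_finite[of B]
  unfolding orthonormal_basis_def by (simp add: inner_commute)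

lemma orthonormal_basis_parseval:
  assumes "orthonormal_basis B"
  shows "x \<bullet> y = (\<Sum>v\<in>B. (v \<bullet> x) * (v \<bullet> y))"
proof -
  have "x \<bullet> y = x \<bullet> (\<Sum>v\<in>B. (v \<bullet> y) *\<^sub>R v)"
    using orthonormal_basis_sum_expand[OF assms] by simp
  then show ?thesis by (simp add: inner_sum_right inner_commute mult.commute)
qed

lemma inner_mult_vec_symmetric:
  assumes "transpose M = M"
  shows "(x::real^'n) \<bullet> (M *v y) = (M *v x) \<bullet> y"
  by (metis assms dot_lmul_matrix transpose_matrix_vector)

lemma quadratic_form_maximiser_in_subspace:
  fixes M :: "real^'n^'n"
  assumes S: "subspace S" "S \<noteq> {0}"
  obtains x where "x \<in> S" "norm x = 1"
    "\<And>y. y \<in> S \<Longrightarrow> y \<bullet> (M *v y) \<le> (x \<bullet> (M *v x)) * (y \<bullet> y)"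
proof -
  let ?T = "S \<inter> sphere 0 1"
  have unit_in_T: "y /\<^sub>R norm y \<in> ?T" if "y \<in> S" "y \<noteq> 0" for y
    using that S(1) by (simp add: subspace_scale)
  obtain a where "a \<in> S" "a \<noteq> 0" using S subspace_0 by blast
  then have ne: "?T \<noteq> {}" using unit_in_T by blast
  have compact: "compact ?T"
    using closed_subspace[OF S(1)] by (simp add: closed_Int_compact)
  have cont: "continuous_on ?T (\<lambda>y. y \<bullet> (M *v y))"
    by (intro continuous_intros linear_continuous_on linear_conv_bounded_linear[THEN iffD1]) simp
  obtain x where x: "x \<in> ?T" and x_max: "\<And>y. y \<in> ?T \<Longrightarrow> y \<bullet> (M *v y) \<le> x \<bullet> (M *v x)"
    using continuous_attains_sup[OF compact ne cont] by blast
  have "y \<bullet> (M *v y) \<le> (x \<bullet> (M *v x)) * (y \<bullet> y)" if "y \<in> S" for y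
  proof (cases "y = 0")
    case False
    have "(y /\<^sub>R norm y) \<bullet> (M *v (y /\<^sub>R norm y)) \<le> x \<bullet> (M *v x)"
      using x_max unit_in_T[OF that False] .
    then show ?thesis
      using False
      by (simp add: matrix_vector_mult_scaleR power2_norm_eq_inner[symmetric] power2_eq_square field_simps)
  qed simp
  then show thesis using that x by auto
qed

lemma symmetric_matrix_eigenvector_in_subspace:
  fixes M :: "real^'n^'n"
  assumes sym: "transpose M = M" and S: "subspace S" "S \<noteq> {0}"
    and inv: "\<And>y. y \<in> S \<Longrightarrow> M *v y \<in> S"
  obtains x where "x \<in> S" "norm x = 1" "M *v x = (x \<bullet> (M *v x)) *\<^sub>R x"
proof -
  obtain x where xS: "x \<in> S" and nx: "norm x = 1"
    and rayleigh: "\<And>y. y \<in> S \<Longrightarrow> y \<bullet> (M *v y) \<le> (x \<bullet> (M *v x)) * (y \<bullet> y)"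
    using quadratic_form_maximiser_in_subspace[OF S] by blast
  define l where "l = x \<bullet> (M *v x)"
  have xx: "x \<bullet> x = 1" using nx by (simp add: norm_eq_1)
  \<comment> \<open>Maximality of x in the direction z forces z = 0.\<close>
  define z where "z = M *v x - l *\<^sub>R x"
  have zS: "z \<in> S" unfolding z_def using inv xS S(1) by (simp add: subspace_diff subspace_scale)
  have xz: "x \<bullet> z = 0" unfolding z_def l_def using xx by (simp add: inner_diff_right)
  have xMz: "x \<bullet> (M *v z) = z \<bullet> z"
  proof -
    have "x \<bullet> (M *v z) = (M *v x) \<bullet> z" using inner_mult_vec_symmetric[OF sym] .
    also have "\<dots> = (z + l *\<^sub>R x) \<bullet> z" by (simp add: z_def)
    also have "\<dots> = z \<bullet> z" using xz by (simp add: inner_add_left inner_commute[of z x])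
    finally show ?thesis .
  qed
  have "0 \<le> (l * (z \<bullet> z) - z \<bullet> (M *v z)) * t\<^sup>2 + (- 2 * (z \<bullet> z)) * t" for t
  proof -
    have "(x + t *\<^sub>R z) \<bullet> (M *v (x + t *\<^sub>R z)) \<le> l * ((x + t *\<^sub>R z) \<bullet> (x + t *\<^sub>R z))"
      unfolding l_def using rayleigh xS zS S(1) by (simp add: subspace_add subspace_scale)
    moreover have "(x + t *\<^sub>R z) \<bullet> (M *v (x + t *\<^sub>R z)) = l + 2 * t * (z \<bullet> z) + t\<^sup>2 * (z \<bullet> (M *v z))"
      using xMz inner_mult_vec_symmetric[OF sym, of z x]
      by (simp add: l_def inner_add_left inner_add_right matrix_vector_right_distrib
          matrix_vector_mult_scaleR inner_commute power2_eq_square algebra_simps)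
    moreover have "(x + t *\<^sub>R z) \<bullet> (x + t *\<^sub>R z) = 1 + t\<^sup>2 * (z \<bullet> z)"
      using xx xz by (simp add: inner_add_left inner_add_right inner_commute power2_eq_square)
    ultimately have "l + 2 * t * (z \<bullet> z) + t\<^sup>2 * (z \<bullet> (M *v z)) \<le> l * (1 + t\<^sup>2 * (z \<bullet> z))"
      by (simp only:)
    then show ?thesis by (simp add: algebra_simps)
  qed
  then have "- 2 * (z \<bullet> z) = 0" by (rule quadratic_nonneg_imp_linear_coeff_zero)
  then have "M *v x = l *\<^sub>R x" by (simp add: z_def)
  then show thesis using that xS nx l_def by auto
qed

lemma span_insert_orthogonal_complement:
  fixes x :: "'a::euclidean_space"
  assumes S: "subspace S" and x: "x \<in> S" "x \<bullet> x = 1" and B: "span B = S \<inter> {y. x \<bullet> y = 0}"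
  shows "span (insert x B) = S"
proof
  have "B \<subseteq> S" using B span_superset by blast
  then show "span (insert x B) \<subseteq> S" using S x by (intro span_minimal) auto
  show "S \<subseteq> span (insert x B)"
  proof
    fix y assume y: "y \<in> S"
    have "y - (x \<bullet> y) *\<^sub>R x \<in> span B"
      unfolding B using y x S by (simp add: subspace_diff subspace_scale inner_diff_right)
    then have "y - (x \<bullet> y) *\<^sub>R x \<in> span (insert x B)"
      using span_mono[of B "insert x B"] by auto
    moreover have "(x \<bullet> y) *\<^sub>R x \<in> span (insert x B)"
      by (simp add: span_base span_scale)
    ultimately have "y - (x \<bullet> y) *\<^sub>R x + (x \<bullet> y) *\<^sub>R x \<in> span (insert x B)"
      by (rule span_add)
    then show "y \<in> span (insert x B)" by simp
  qed
qed

lemma symmetric_matrix_eigenbasis_of_invariant_subspace: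
  fixes M :: "real^'n^'n"
  assumes sym: "transpose M = M"
  shows "subspace S \<Longrightarrow> (\<And>y. y \<in> S \<Longrightarrow> M *v y \<in> S) \<Longrightarrow>
    \<exists>B\<subseteq>S. pairwise orthogonal B \<and> (\<forall>v\<in>B. norm v = 1 \<and> M *v v = (v \<bullet> (M *v v)) *\<^sub>R v) \<and> span B = S"
proof (induction "dim S" arbitrary: S rule: less_induct)
  case less
  show ?case
  proof (cases "S = {0}")
    case True
    then show ?thesis by (intro exI[of _ "{}"]) auto
  next
    case False
    obtain x where xS: "x \<in> S" and nx: "norm x = 1" and eig: "M *v x = (x \<bullet> (M *v x)) *\<^sub>R x"
      using symmetric_matrix_eigenvector_in_subspace[OF sym less.prems(1) False less.prems(2)] by blast
    have xx: "x \<bullet> x = 1" using nx by (simp add: norm_eq_1)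
    define S' where "S' = S \<inter> {y. x \<bullet> y = 0}"
    have sub': "subspace S'" unfolding S'_def using less.prems(1)
      by (auto simp: subspace_def inner_add_right)
    have inv': "M *v y \<in> S'" if "y \<in> S'" for y
    proof -
      have "x \<bullet> (M *v y) = (M *v x) \<bullet> y" using inner_mult_vec_symmetric[OF sym] .
      also have "\<dots> = (x \<bullet> (M *v x)) * (x \<bullet> y)" by (metis eig inner_scaleR_left)
      finally show ?thesis using that less.prems(2) eig unfolding S'_def by auto
    qed
    have "x \<notin> S'" using xx unfolding S'_def by auto
    then have "S' \<subset> S" using xS unfolding S'_def by blast
    then have "dim S' < dim S" using sub' less.prems(1) by (intro dim_psubset) (metis span_eq_iff)
    then obtain B' where B': "B' \<subseteq> S'" "pairwise orthogonal B'"
      "\<forall>v\<in>B'. norm v = 1 \<and> M *v v = (v \<bullet> (M *v v)) *\<^sub>R v" "span B' = S'"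
      using less.hyps sub' inv' by blast
    have "span (insert x B') = S"
      using span_insert_orthogonal_complement[OF less.prems(1) xS xx] B'(4) unfolding S'_def by blast
    moreover have "pairwise orthogonal (insert x B')"
      using B'(1,2) unfolding S'_def by (auto simp: pairwise_insert orthogonal_def inner_commute)
    ultimately show ?thesis
      using B'(1,3) xS nx eig unfolding S'_def by (intro exI[of _ "insert x B'"]) auto
  qed
qed

theorem symmetric_matrix_orthonormal_eigenbasis:
  fixes M :: "real^'n^'n"
  assumes "transpose M = M"
  obtains B where "orthonormal_basis B" "\<And>v. v \<in> B \<Longrightarrow> M *v v = (v \<bullet> (M *v v)) *\<^sub>R v"
  using symmetric_matrix_eigenbasis_of_invariant_subspace[OF assms subspace_UNIV]
  unfolding orthonormal_basis_def by blast

lemma orthonormal_basis_sum_components: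
  fixes B :: "(real^'n) set"
  assumes "orthonormal_basis B"
  shows "(\<Sum>v\<in>B. v $ i * v $ j) = (if i = j then 1 else 0)"
proof -
  have "v \<bullet> axis k 1 = v $ k" for v :: "real^'n" and k
    by (simp only: inner_axis) simp
  moreover have "axis i 1 \<bullet> axis j (1::real) = (if i = j then 1 else 0)"
    by (simp only: inner_axis_axis) simp
  ultimately show ?thesis
    using orthonormal_basis_parseval[OF assms, of "axis i 1" "axis j 1"] by simp
qed

lemma trace_eq_sum_orthonormal_basis:
  fixes S :: "real^'n^'n"
  assumes B: "orthonormal_basis B"
  shows "trace S = (\<Sum>v\<in>B. v \<bullet> (S *v v))"
proof -
  have "(\<Sum>v\<in>B. v \<bullet> (S *v v)) = (\<Sum>v\<in>B. \<Sum>i\<in>UNIV. \<Sum>j\<in>UNIV. S$i$j * (v$i * v$j))"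
    by (simp add: inner_vec_def matrix_vector_mult_def sum_distrib_left algebra_simps)
  also have "\<dots> = (\<Sum>i\<in>UNIV. \<Sum>j\<in>UNIV. S$i$j * (\<Sum>v\<in>B. v$i * v$j))"
    by (subst sum.swap) (simp add: sum.swap[of _ B] sum_distrib_left)
  also have "\<dots> = (\<Sum>i\<in>UNIV. \<Sum>j\<in>UNIV. if j = i then S$i$i else 0)"
    by (intro sum.cong refl) (auto simp: orthonormal_basis_sum_components[OF B])
  also have "\<dots> = trace S" by (simp add: trace_def)
  finally show ?thesis by simp
qed

lemma vector_matrix_mult_component: "(v v* Z) $ j = v \<bullet> column j (Z :: real^'c^'m)"
  by (simp add: vector_matrix_mult_def column_def inner_vec_def)

lemma inner_matrix_eq_sum_orthonormal_basis:
  fixes Z X :: "real^'c^'m"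
  assumes B: "orthonormal_basis B"
  shows "Z \<bullet> X = (\<Sum>v\<in>B. (v v* Z) \<bullet> (v v* X))"
proof -
  have columns: "(v v* Z) \<bullet> (v v* X) = (\<Sum>j\<in>UNIV. (v \<bullet> column j Z) * (v \<bullet> column j X))" for v
    by (simp only: inner_vec_def[of "v v* Z"] inner_real_def vector_matrix_mult_component)
  have "Z \<bullet> X = (\<Sum>i\<in>UNIV. \<Sum>j\<in>UNIV. Z$i$j * X$i$j)"
    by (simp only: inner_vec_def inner_real_def)
  also have "\<dots> = (\<Sum>j\<in>UNIV. column j Z \<bullet> column j X)"
    by (subst sum.swap) (simp add: inner_vec_def column_def)
  also have "\<dots> = (\<Sum>j\<in>UNIV. \<Sum>v\<in>B. (v \<bullet> column j Z) * (v \<bullet> column j X))"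
    by (intro sum.cong refl orthonormal_basis_parseval[OF B])
  also have "\<dots> = (\<Sum>v\<in>B. (v v* Z) \<bullet> (v v* X))"
    unfolding columns by (rule sum.swap)
  finally show ?thesis .
qed

lemma matrix_eq_on_orthonormal_basis:
  fixes M N :: "real^'n^'m"
  assumes B: "orthonormal_basis B" and eq: "\<And>v. v \<in> B \<Longrightarrow> M *v v = N *v v"
  shows "M = N"
proof (rule iffD2[OF matrix_eq], rule allI)
  fix x
  have "M *v x = M *v (\<Sum>v\<in>B. (v \<bullet> x) *\<^sub>R v)" using orthonormal_basis_sum_expand[OF B] by simp
  also have "\<dots> = N *v (\<Sum>v\<in>B. (v \<bullet> x) *\<^sub>R v)"
    using eq by (simp add: linear_sum[OF matrix_vector_mul_linear] matrix_vector_mult_scaleR o_def)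
  also have "\<dots> = N *v x" using orthonormal_basis_sum_expand[OF B] by simp
  finally show "M *v x = N *v x" .
qed

definition outer_sum :: "'a set \<Rightarrow> ('a \<Rightarrow> real^'m) \<Rightarrow> ('a \<Rightarrow> real^'n) \<Rightarrow> real^'n^'m" where
  "outer_sum C g h = (\<chi> i j. \<Sum>v\<in>C. g v $ i * h v $ j)"

lemma outer_sum_mult_vec: "outer_sum C g h *v y = (\<Sum>v\<in>C. (h v \<bullet> y) *\<^sub>R g v)"
  by (simp add: vec_eq_iff outer_sum_def matrix_vector_mult_def inner_vec_def sum_component
      sum_distrib_left sum_distrib_right algebra_simps sum.swap[of _ C])

lemma transpose_outer_sum: "transpose (outer_sum C g h) = outer_sum C h g"
  by (simp add: vec_eq_iff outer_sum_def transpose_def mult.commute)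

lemma inner_outer_sum: "outer_sum C g h \<bullet> X = (\<Sum>v\<in>C. g v \<bullet> (X *v h v))"
proof -
  have "outer_sum C g h \<bullet> X = (\<Sum>i\<in>UNIV. \<Sum>j\<in>UNIV. \<Sum>v\<in>C. g v $ i * h v $ j * X $ i $ j)"
    by (simp add: outer_sum_def inner_vec_def sum_distrib_right)
  also have "\<dots> = (\<Sum>v\<in>C. \<Sum>i\<in>UNIV. \<Sum>j\<in>UNIV. g v $ i * (X $ i $ j * h v $ j))"
    by (simp add: sum.swap[of _ UNIV C] ac_simps)
  also have "\<dots> = (\<Sum>v\<in>C. g v \<bullet> (X *v h v))"
    by (simp add: inner_vec_def matrix_vector_mult_def sum_distrib_left)
  finally show ?thesis .
qed

lemma outer_sum_mult_basis_vector:
  assumes B: "orthonormal_basis B" and w: "w \<in> B"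
  shows "outer_sum B g (\<lambda>v. v) *v w = g w"
proof -
  have "outer_sum B g (\<lambda>v. v) *v w = (\<Sum>v\<in>B. if v = w then g w else 0)"
    unfolding outer_sum_mult_vec
    by (intro sum.cong refl) (auto simp: orthonormal_basis_inner[OF B _ w])
  also have "\<dots> = g w" using orthonormal_basis_finite[OF B] w by simp
  finally show ?thesis .
qed

lemma norm_outer_sum_mult_vec_le:
  assumes B: "orthonormal_basis B"
    and orth: "\<And>v w. v \<in> B \<Longrightarrow> w \<in> B \<Longrightarrow> v \<noteq> w \<Longrightarrow> orthogonal (g v) (g w)"
    and g: "\<And>v. v \<in> B \<Longrightarrow> norm (g v) \<le> 1"
  shows "norm (outer_sum B g (\<lambda>v. v) *v y) \<le> norm y"
proof -
  have "(norm (outer_sum B g (\<lambda>v. v) *v y))\<^sup>2 = (\<Sum>v\<in>B. (norm ((v \<bullet> y) *\<^sub>R g v))\<^sup>2)"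
    unfolding outer_sum_mult_vec using orth
    by (intro norm_sum_Pythagorean orthonormal_basis_finite[OF B]) (auto simp: pairwise_def orthogonal_clauses)
  also have "\<dots> \<le> (\<Sum>v\<in>B. (v \<bullet> y)\<^sup>2)"
  proof (rule sum_mono)
    fix v assume "v \<in> B"
    then have "(norm (g v))\<^sup>2 \<le> 1" using g by (simp add: power_le_one)
    then show "(norm ((v \<bullet> y) *\<^sub>R g v))\<^sup>2 \<le> (v \<bullet> y)\<^sup>2"
      using mult_left_mono[of _ 1 "(v \<bullet> y)\<^sup>2"] by (simp add: power_mult_distrib)
  qed
  also have "\<dots> = y \<bullet> y"
    using orthonormal_basis_parseval[OF B, of y y] by (simp add: power2_eq_square)
  also have "\<dots> = (norm y)\<^sup>2" by (simp add: power2_norm_eq_inner)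
  finally show ?thesis by (rule power2_le_imp_le) simp
qed

lemma psd_matrix_symmetric: "psd_matrix S \<Longrightarrow> transpose S = S"
  unfolding psd_matrix_def by blast

lemma psd_matrix_nonneg: "psd_matrix S \<Longrightarrow> 0 \<le> x \<bullet> (S *v x)"
  unfolding psd_matrix_def by blast

lemma psd_matrix_mult_transpose: "psd_matrix (X ** transpose X)"
  unfolding psd_matrix_def
proof (intro conjI allI)
  show "transpose (X ** transpose X) = X ** transpose X"
    by (simp add: matrix_transpose_mul)
  fix x :: "real^'a"
  have "x \<bullet> ((X ** transpose X) *v x) = (x v* X) \<bullet> (x v* X)"
    by (metis dot_lmul_matrix matrix_vector_mul_assoc transpose_matrix_vector)
  then show "0 \<le> x \<bullet> ((X ** transpose X) *v x)" by simp
qed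

lemma psd_matrix_has_sqrt:
  fixes M :: "real^'n^'n"
  assumes M: "psd_matrix M"
  obtains S where "psd_matrix S" "S ** S = M"
proof -
  obtain B where B: "orthonormal_basis B" and eig: "\<And>v. v \<in> B \<Longrightarrow> M *v v = (v \<bullet> (M *v v)) *\<^sub>R v"
    using symmetric_matrix_orthonormal_eigenbasis psd_matrix_symmetric[OF M] by blast
  define lam where "lam v = v \<bullet> (M *v v)" for v
  have lam: "0 \<le> lam v" for v unfolding lam_def using psd_matrix_nonneg[OF M] .
  define S where "S = outer_sum B (\<lambda>v. sqrt (lam v) *\<^sub>R v) (\<lambda>v. v)"
  have Sv: "S *v v = sqrt (lam v) *\<^sub>R v" if "v \<in> B" for v
    unfolding S_def using outer_sum_mult_basis_vector[OF B that] .
  have "transpose S = S"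
    unfolding S_def transpose_outer_sum by (simp add: outer_sum_def vec_eq_iff ac_simps)
  moreover have "0 \<le> x \<bullet> (S *v x)" for x
  proof -
    have "x \<bullet> (S *v x) = (\<Sum>v\<in>B. sqrt (lam v) * (v \<bullet> x)\<^sup>2)"
      unfolding S_def outer_sum_mult_vec
      by (simp add: inner_sum_right inner_commute power2_eq_square mult.assoc mult.left_commute)
    also have "\<dots> \<ge> 0" using lam by (intro sum_nonneg) simp
    finally show ?thesis .
  qed
  moreover have "S ** S = M"
  proof (rule matrix_eq_on_orthonormal_basis[OF B])
    fix v assume v: "v \<in> B"
    have "(S ** S) *v v = S *v (S *v v)" by (simp add: matrix_vector_mul_assoc)
    also have "\<dots> = lam v *\<^sub>R v" using lam[of v] by (simp add: Sv[OF v] matrix_vector_mult_scaleR)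
    also have "\<dots> = M *v v" using eig[OF v] unfolding lam_def by simp
    finally show "(S ** S) *v v = M *v v" .
  qed
  ultimately show thesis using that unfolding psd_matrix_def by blast
qed

lemma psd_matrix_square_eq_imp_eq:
  fixes S T :: "real^'n^'n"
  assumes S: "psd_matrix S" and T: "psd_matrix T" and eq: "S ** S = T ** T"
  shows "S = T"
proof -
  obtain B where B: "orthonormal_basis B" and eig: "\<And>v. v \<in> B \<Longrightarrow> S *v v = (v \<bullet> (S *v v)) *\<^sub>R v"
    using symmetric_matrix_orthonormal_eigenbasis psd_matrix_symmetric[OF S] by blast
  show ?thesis
  proof (rule matrix_eq_on_orthonormal_basis[OF B])
    fix v assume v: "v \<in> B"
    define s where "s = v \<bullet> (S *v v)"
    have s: "0 \<le> s" unfolding s_def using psd_matrix_nonneg[OF S] .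
    have Sv: "S *v v = s *\<^sub>R v" unfolding s_def using eig[OF v] .
    have TTv: "T *v (T *v v) = (s * s) *\<^sub>R v"
    proof -
      have "T *v (T *v v) = S *v (S *v v)" by (simp add: matrix_vector_mul_assoc eq)
      then show ?thesis by (simp add: Sv matrix_vector_mult_scaleR)
    qed
    have "T *v v = s *\<^sub>R v"
    proof (cases "s = 0")
      case True
      have "(T *v v) \<bullet> (T *v v) = v \<bullet> (T *v (T *v v))"
        using inner_mult_vec_symmetric[OF psd_matrix_symmetric[OF T], of v "T *v v"] by simp
      also have "\<dots> = 0" using TTv True by simp
      finally show ?thesis using True by simp
    next
      case False
      \<comment> \<open>w is an eigenvector of T for the eigenvalue -s < 0, so it must vanish.\<close>
      define w where "w = T *v v - s *\<^sub>R v"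
      have "T *v w = - s *\<^sub>R w"
        unfolding w_def using TTv
        by (simp add: matrix_vector_mult_diff_distrib matrix_vector_mult_scaleR algebra_simps)
      then have "s * (w \<bullet> w) \<le> 0" using psd_matrix_nonneg[OF T, of w] by simp
      then have "w \<bullet> w \<le> 0" using s False by (simp add: mult_le_0_iff)
      then have "w = 0" by (metis inner_ge_zero inner_eq_zero_iff order_antisym)
      then show ?thesis unfolding w_def by simp
    qed
    then show "S *v v = T *v v" using Sv by simp
  qed
qed

lemma psd_sqrt_unique:
  assumes "psd_matrix S" "S ** S = M"
  shows "psd_sqrt M = S"
  unfolding psd_sqrt_def
proof (rule the_equality)
  show "psd_matrix S \<and> S ** S = M" using assms by blast
  show "T = S" if "psd_matrix T \<and> T ** T = M" for T
    using that assms psd_matrix_square_eq_imp_eq by metis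
qed

lemma psd_matrix_psd_sqrt: "psd_matrix M \<Longrightarrow> psd_matrix (psd_sqrt M)"
  by (metis psd_matrix_has_sqrt psd_sqrt_unique)

lemma psd_sqrt_square: "psd_matrix M \<Longrightarrow> psd_sqrt M ** psd_sqrt M = M"
  by (metis psd_matrix_has_sqrt psd_sqrt_unique)

lemma nuclear_norm_singular_basis:
  fixes X :: "real^'c^'m"
  obtains B where "orthonormal_basis B"
    "\<And>v w. v \<in> B \<Longrightarrow> w \<in> B \<Longrightarrow> v \<noteq> w \<Longrightarrow> (v v* X) \<bullet> (w v* X) = 0"
    "nuclear_norm X = (\<Sum>v\<in>B. norm (v v* X))"
proof -
  define S where "S = psd_sqrt (X ** transpose X)"
  have S: "psd_matrix S" and SS: "S ** S = X ** transpose X"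
    unfolding S_def using psd_matrix_psd_sqrt psd_sqrt_square psd_matrix_mult_transpose by blast+
  obtain B where B: "orthonormal_basis B" and eig: "\<And>v. v \<in> B \<Longrightarrow> S *v v = (v \<bullet> (S *v v)) *\<^sub>R v"
    using symmetric_matrix_orthonormal_eigenbasis psd_matrix_symmetric[OF S] by blast
  define s where "s v = v \<bullet> (S *v v)" for v
  have s: "0 \<le> s v" for v unfolding s_def using psd_matrix_nonneg[OF S] .
  have Sv: "S *v v = s v *\<^sub>R v" if "v \<in> B" for v unfolding s_def using eig[OF that] .
  have rows: "(v v* X) \<bullet> (w v* X) = (S *v v) \<bullet> (S *v w)" for v w
  proof -
    have "(v v* X) \<bullet> (w v* X) = v \<bullet> ((X ** transpose X) *v w)"
      by (metis dot_lmul_matrix matrix_vector_mul_assoc transpose_matrix_vector)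
    also have "\<dots> = v \<bullet> (S *v (S *v w))" by (simp add: matrix_vector_mul_assoc SS)
    also have "\<dots> = (S *v v) \<bullet> (S *v w)" by (rule inner_mult_vec_symmetric[OF psd_matrix_symmetric[OF S]])
    finally show ?thesis .
  qed
  show thesis
  proof (rule that[OF B])
    fix v w assume "v \<in> B" "w \<in> B" "v \<noteq> w"
    then show "(v v* X) \<bullet> (w v* X) = 0"
      unfolding rows by (simp add: Sv orthonormal_basis_inner[OF B])
  next
    have "nuclear_norm X = (\<Sum>v\<in>B. s v)"
      unfolding nuclear_norm_def S_def[symmetric] s_def by (rule trace_eq_sum_orthonormal_basis[OF B])
    also have "\<dots> = (\<Sum>v\<in>B. norm (v v* X))"
    proof (intro sum.cong refl)
      fix v assume v: "v \<in> B"
      have "norm (v v* X) = norm (S *v v)" using rows[of v v] by (simp add: norm_eq_sqrt_inner)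
      also have "\<dots> = s v" using s[of v] orthonormal_basis_norm[OF B v] by (simp add: Sv[OF v])
      finally show "s v = norm (v v* X)" by simp
    qed
    finally show "nuclear_norm X = (\<Sum>v\<in>B. norm (v v* X))" .
  qed
qed

lemma nuclear_norm_nonneg: "0 \<le> nuclear_norm X"
  by (rule nuclear_norm_singular_basis[of X]) (simp add: sum_nonneg)

lemma inner_le_nuclear_norm:
  fixes Z X :: "real^'c^'m"
  assumes Z: "\<And>v. norm (v v* Z) \<le> c * norm v"
  shows "Z \<bullet> X \<le> c * nuclear_norm X"
proof -
  obtain B where B: "orthonormal_basis B" and nuc: "nuclear_norm X = (\<Sum>v\<in>B. norm (v v* X))"
    using nuclear_norm_singular_basis by blast
  have "Z \<bullet> X = (\<Sum>v\<in>B. (v v* Z) \<bullet> (v v* X))" by (rule inner_matrix_eq_sum_orthonormal_basis[OF B])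
  also have "\<dots> \<le> (\<Sum>v\<in>B. c * norm (v v* X))"
  proof (rule sum_mono)
    fix v assume "v \<in> B"
    then have "norm (v v* Z) \<le> c" using Z[of v] orthonormal_basis_norm[OF B] by simp
    then have "norm (v v* Z) * norm (v v* X) \<le> c * norm (v v* X)" by (simp add: mult_right_mono)
    then show "(v v* Z) \<bullet> (v v* X) \<le> c * norm (v v* X)"
      using norm_cauchy_schwarz[of "v v* Z" "v v* X"] by linarith
  qed
  also have "\<dots> = c * nuclear_norm X" by (simp add: nuc sum_distrib_left)
  finally show ?thesis .
qed

lemma nuclear_norm_attained:
  fixes X :: "real^'c^'m"
  obtains W :: "real^'c^'m" where "\<And>v. norm (v v* W) \<le> norm v" "W \<bullet> X = nuclear_norm X"
proof -
  obtain B where B: "orthonormal_basis B"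
    and orth: "\<And>v w. v \<in> B \<Longrightarrow> w \<in> B \<Longrightarrow> v \<noteq> w \<Longrightarrow> (v v* X) \<bullet> (w v* X) = 0"
    and nuc: "nuclear_norm X = (\<Sum>v\<in>B. norm (v v* X))"
    using nuclear_norm_singular_basis by blast
  \<comment> \<open>the partial isometry of the polar decomposition of X\<close>
  define W where "W = outer_sum B (\<lambda>v. v) (\<lambda>v. sgn (v v* X))"
  have "norm (y v* W) \<le> norm y" for y
  proof -
    have "y v* W = transpose W *v y" by simp
    also have "\<dots> = outer_sum B (\<lambda>v. sgn (v v* X)) (\<lambda>v. v) *v y"
      unfolding W_def transpose_outer_sum ..
    also have "norm \<dots> \<le> norm y"
    proof (rule norm_outer_sum_mult_vec_le[OF B])
      show "orthogonal (sgn (v v* X)) (sgn (w v* X))" if "v \<in> B" "w \<in> B" "v \<noteq> w" for v w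
        using orth[OF that] by (simp add: orthogonal_def sgn_div_norm)
      show "norm (sgn (v v* X)) \<le> 1" for v by (simp add: norm_sgn)
    qed
    finally show ?thesis .
  qed
  moreover have "W \<bullet> X = nuclear_norm X"
  proof -
    have "W \<bullet> X = (\<Sum>v\<in>B. (v v* X) \<bullet> sgn (v v* X))"
      unfolding W_def inner_outer_sum dot_lmul_matrix ..
    also have "\<dots> = (\<Sum>v\<in>B. norm (v v* X))"
    proof (intro sum.cong refl)
      fix v
      show "(v v* X) \<bullet> sgn (v v* X) = norm (v v* X)"
        by (cases "v v* X = 0") (simp_all add: sgn_div_norm power2_norm_eq_inner[symmetric] power2_eq_square)
    qed
    finally show ?thesis using nuc by simp
  qed
  ultimately show thesis using that by blast
qed

lemma norm_mult_vec_le_if_vector_matrix_mult_le: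
  fixes M :: "real^'a^'b"
  assumes c: "0 \<le> c" and M: "\<And>v. norm (v v* M) \<le> c * norm v"
  shows "norm (M *v v) \<le> c * norm v"
proof -
  let ?w = "M *v v"
  have "(norm ?w)\<^sup>2 = (?w v* M) \<bullet> v"
    by (simp add: power2_norm_eq_inner dot_lmul_matrix)
  also have "\<dots> \<le> norm (?w v* M) * norm v" by (rule norm_cauchy_schwarz)
  also have "\<dots> \<le> c * norm ?w * norm v" by (intro mult_right_mono M) simp
  finally have "(norm ?w)\<^sup>2 \<le> (c * norm v) * norm ?w" by (simp add: ac_simps)
  then show ?thesis
    using c by (cases "norm ?w = 0") (auto simp: power2_eq_square)
qed

lemma inner_matrix_transpose: "transpose A \<bullet> (B :: real^'n^'m) = A \<bullet> transpose B"
  unfolding inner_vec_def transpose_def inner_real_def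
  by (simp add: sum.swap[of "\<lambda>i j. A $ j $ i * B $ i $ j"])

lemma inner_matrix_mult_right: "W \<bullet> (X ** D) = (W ** transpose D) \<bullet> (X :: real^'r^'m)"
proof -
  have "W \<bullet> (X ** D) = (\<Sum>i\<in>UNIV. \<Sum>j\<in>UNIV. \<Sum>k\<in>UNIV. W$i$j * X$i$k * D$k$j)"
    by (simp add: inner_vec_def matrix_matrix_mult_def sum_distrib_left mult.assoc)
  also have "\<dots> = (\<Sum>i\<in>UNIV. \<Sum>k\<in>UNIV. \<Sum>j\<in>UNIV. W$i$j * X$i$k * D$k$j)"
    by (intro sum.cong refl sum.swap)
  also have "\<dots> = (\<Sum>i\<in>UNIV. \<Sum>k\<in>UNIV. (\<Sum>j\<in>UNIV. W$i$j * D$k$j) * X$i$k)"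
    by (simp add: sum_distrib_left sum_distrib_right ac_simps)
  also have "\<dots> = (W ** transpose D) \<bullet> X"
    by (simp add: inner_vec_def matrix_matrix_mult_def transpose_def)
  finally show ?thesis .
qed

lemma nuclear_norm_triangle: "nuclear_norm (X + Y) \<le> nuclear_norm X + nuclear_norm Y"
proof -
  obtain W where W: "\<And>v. norm (v v* W) \<le> norm v" "W \<bullet> (X + Y) = nuclear_norm (X + Y)"
    using nuclear_norm_attained by blast
  have "nuclear_norm (X + Y) = W \<bullet> X + W \<bullet> Y" by (simp add: W(2)[symmetric] inner_add_right)
  also have "\<dots> \<le> 1 * nuclear_norm X + 1 * nuclear_norm Y"
    using W(1) by (intro add_mono inner_le_nuclear_norm) simp_all
  finally show ?thesis by simp
qed

lemma nuclear_norm_mult_right_le: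
  fixes X :: "real^'r^'m" and D :: "real^'s^'r"
  assumes c: "0 \<le> c" and D: "\<And>v. norm (D *v v) \<le> c * norm v"
  shows "nuclear_norm (X ** D) \<le> c * nuclear_norm X"
proof -
  obtain W where W: "\<And>v. norm (v v* W) \<le> norm v" "W \<bullet> (X ** D) = nuclear_norm (X ** D)"
    using nuclear_norm_attained by blast
  have "norm (v v* (W ** transpose D)) \<le> c * norm v" for v
  proof -
    have "norm (v v* (W ** transpose D)) = norm (D *v (v v* W))"
      by (simp flip: vector_matrix_mul_assoc)
    also have "\<dots> \<le> c * norm (v v* W)" by (rule D)
    also have "\<dots> \<le> c * norm v" using W(1) c by (rule mult_left_mono)
    finally show ?thesis .
  qed
  then have "(W ** transpose D) \<bullet> X \<le> c * nuclear_norm X" by (rule inner_le_nuclear_norm)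
  then show ?thesis using W(2) by (simp add: inner_matrix_mult_right)
qed

lemma nuclear_norm_transpose: "nuclear_norm (transpose X) = nuclear_norm X"
proof -
  have le: "nuclear_norm (transpose Y) \<le> nuclear_norm Y" for Y :: "real^'c^'m"
  proof -
    obtain W where W: "\<And>v. norm (v v* W) \<le> norm v" "W \<bullet> transpose Y = nuclear_norm (transpose Y)"
      using nuclear_norm_attained by blast
    have "norm (v v* transpose W) \<le> 1 * norm v" for v
      using norm_mult_vec_le_if_vector_matrix_mult_le[of 1 W] W(1) by simp
    then have "transpose W \<bullet> Y \<le> 1 * nuclear_norm Y" by (rule inner_le_nuclear_norm)
    then show ?thesis using W(2) by (simp add: inner_matrix_transpose)
  qed
  show ?thesis using le[of X] le[of "transpose X"] by simp
qed

lemma nuclear_norm_uminus: "nuclear_norm (- X) = nuclear_norm X"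
proof -
  have "(- X) ** transpose (- X) = X ** transpose X"
    by (simp add: vec_eq_iff matrix_matrix_mult_def transpose_def sum_negf)
  then show ?thesis unfolding nuclear_norm_def by simp
qed

lemma abs_inner_mult_vec_le_nuclear_norm:
  fixes E :: "real^'n^'n"
  assumes u: "norm u = 1"
  shows "\<bar>u \<bullet> (E *v u)\<bar> \<le> nuclear_norm E"
proof -
  define U where "U = outer_sum {u} (\<lambda>v. v) (\<lambda>v. v)"
  have "s * (u \<bullet> (E *v u)) \<le> nuclear_norm E" if s: "\<bar>s\<bar> = 1" for s
  proof -
    have "v v* U = (u \<bullet> v) *\<^sub>R u" for v
    proof -
      have "v v* U = transpose U *v v" by simp
      then show ?thesis unfolding U_def transpose_outer_sum outer_sum_mult_vec by simp
    qed
    then have "norm (v v* (s *\<^sub>R U)) \<le> 1 * norm v" for v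
      using Cauchy_Schwarz_ineq2[of u v] u s by (simp add: vector_scaleR_matrix_ac abs_mult)
    then have "(s *\<^sub>R U) \<bullet> E \<le> 1 * nuclear_norm E" by (rule inner_le_nuclear_norm)
    then show ?thesis by (simp add: U_def inner_outer_sum)
  qed
  from this[of 1] this[of "- 1"] show ?thesis by (simp add: abs_le_iff)
qed

lemma psd_sqrt_diff_eigenvalue_bound:
  fixes SP SQ :: "real^'n^'n"
  assumes P: "psd_matrix SP" and Q: "psd_matrix SQ" and u: "norm u = 1"
    and eig: "(SP - SQ) *v u = \<mu> *\<^sub>R u"
  shows "\<mu>\<^sup>2 \<le> \<bar>u \<bullet> ((SP ** SP - SQ ** SQ) *v u)\<bar>"
proof -
  define a where "a = SP *v u"
  define b where "b = SQ *v u"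
  have uu: "u \<bullet> u = 1" using u by (simp add: norm_eq_1)
  have ab: "a = b + \<mu> *\<^sub>R u"
    using eig unfolding a_def b_def by (simp add: matrix_vector_mult_diff_rdistrib algebra_simps)
  have val: "u \<bullet> ((SP ** SP - SQ ** SQ) *v u) = a \<bullet> a - b \<bullet> b"
    unfolding a_def b_def
    using inner_mult_vec_symmetric[OF psd_matrix_symmetric[OF P], of u "SP *v u"]
      inner_mult_vec_symmetric[OF psd_matrix_symmetric[OF Q], of u "SQ *v u"]
    by (simp add: matrix_vector_mult_diff_rdistrib inner_diff_right matrix_vector_mul_assoc[symmetric])
  have ua: "0 \<le> u \<bullet> a" and ub: "0 \<le> u \<bullet> b"
    unfolding a_def b_def using psd_matrix_nonneg P Q by auto
  show ?thesis
  proof (cases "0 \<le> \<mu>")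
    case True
    have "a \<bullet> a - b \<bullet> b = 2 * \<mu> * (u \<bullet> b) + \<mu>\<^sup>2"
      unfolding ab using uu
      by (simp add: inner_add_left inner_add_right inner_commute power2_eq_square algebra_simps)
    moreover have "0 \<le> 2 * \<mu> * (u \<bullet> b)" using True ub by simp
    ultimately show ?thesis
      using val abs_ge_self[of "u \<bullet> ((SP ** SP - SQ ** SQ) *v u)"] by linarith
  next
    case False
    have "a \<bullet> a - b \<bullet> b = 2 * \<mu> * (u \<bullet> a) - \<mu>\<^sup>2"
      unfolding ab using uu
      by (simp add: inner_add_left inner_add_right inner_commute power2_eq_square algebra_simps)
    moreover have "2 * \<mu> * (u \<bullet> a) \<le> 0" using False ua by (simp add: mult_nonpos_nonneg)
    ultimately show ?thesis
      using val abs_ge_minus_self[of "u \<bullet> ((SP ** SP - SQ ** SQ) *v u)"] by linarith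
  qed
qed

lemma symmetric_matrix_norm_le_eigenvalue_bound:
  fixes D :: "real^'n^'n"
  assumes sym: "transpose D = D"
    and bound: "\<And>u \<mu>. norm u = 1 \<Longrightarrow> D *v u = \<mu> *\<^sub>R u \<Longrightarrow> \<mu>\<^sup>2 \<le> e"
  shows "norm (D *v v) \<le> sqrt e * norm v"
proof -
  obtain B where B: "orthonormal_basis B" and eig: "\<And>w. w \<in> B \<Longrightarrow> D *v w = (w \<bullet> (D *v w)) *\<^sub>R w"
    using symmetric_matrix_orthonormal_eigenbasis[OF sym] by blast
  define \<mu> where "\<mu> w = w \<bullet> (D *v w)" for w
  have Dw: "D *v w = \<mu> w *\<^sub>R w" if "w \<in> B" for w unfolding \<mu>_def using eig[OF that] .
  have "(D *v v) \<bullet> (D *v v) = (\<Sum>w\<in>B. (w \<bullet> (D *v v))\<^sup>2)"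
    using orthonormal_basis_parseval[OF B, of "D *v v" "D *v v"] by (simp add: power2_eq_square)
  also have "\<dots> = (\<Sum>w\<in>B. (\<mu> w)\<^sup>2 * (w \<bullet> v)\<^sup>2)"
  proof (intro sum.cong refl)
    fix w assume w: "w \<in> B"
    have "w \<bullet> (D *v v) = \<mu> w * (w \<bullet> v)"
      using inner_mult_vec_symmetric[OF sym, of w v] by (simp add: Dw[OF w])
    then show "(w \<bullet> (D *v v))\<^sup>2 = (\<mu> w)\<^sup>2 * (w \<bullet> v)\<^sup>2" by (simp add: power_mult_distrib)
  qed
  also have "\<dots> \<le> (\<Sum>w\<in>B. e * (w \<bullet> v)\<^sup>2)"
    using bound Dw orthonormal_basis_norm[OF B] by (intro sum_mono mult_right_mono) auto
  also have "\<dots> = e * (v \<bullet> v)"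
    using orthonormal_basis_parseval[OF B, of v v] by (simp add: sum_distrib_left power2_eq_square)
  finally have "(D *v v) \<bullet> (D *v v) \<le> e * (v \<bullet> v)" .
  then have "sqrt ((D *v v) \<bullet> (D *v v)) \<le> sqrt (e * (v \<bullet> v))" by (rule real_sqrt_le_mono)
  then show ?thesis by (simp add: norm_eq_sqrt_inner real_sqrt_mult)
qed

lemma norm_psd_sqrt_diff_mult_vec_le:
  assumes P: "psd_matrix P" and Q: "psd_matrix Q"
  shows "norm ((psd_sqrt P - psd_sqrt Q) *v v) \<le> sqrt (nuclear_norm (P - Q)) * norm v"
proof (rule symmetric_matrix_norm_le_eigenvalue_bound)
  show "transpose (psd_sqrt P - psd_sqrt Q) = psd_sqrt P - psd_sqrt Q"
    using psd_matrix_symmetric[OF psd_matrix_psd_sqrt[OF P]]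
      psd_matrix_symmetric[OF psd_matrix_psd_sqrt[OF Q]]
    by (simp add: vec_eq_iff transpose_def)
  fix u \<mu> assume u: "norm u = 1" and eig: "(psd_sqrt P - psd_sqrt Q) *v u = \<mu> *\<^sub>R u"
  have "\<mu>\<^sup>2 \<le> \<bar>u \<bullet> ((psd_sqrt P ** psd_sqrt P - psd_sqrt Q ** psd_sqrt Q) *v u)\<bar>"
    by (rule psd_sqrt_diff_eigenvalue_bound[OF psd_matrix_psd_sqrt[OF P] psd_matrix_psd_sqrt[OF Q] u eig])
  then have "\<mu>\<^sup>2 \<le> \<bar>u \<bullet> ((P - Q) *v u)\<bar>"
    by (simp only: psd_sqrt_square[OF P] psd_sqrt_square[OF Q])
  also have "\<dots> \<le> nuclear_norm (P - Q)" by (rule abs_inner_mult_vec_le_nuclear_norm[OF u])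
  finally show "\<mu>\<^sup>2 \<le> nuclear_norm (P - Q)" .
qed

lemma nuclear_norm_mult_diff_le:
  assumes c: "0 \<le> c" and ST: "\<And>v. norm ((S - T) *v v) \<le> c * norm v"
  shows "nuclear_norm (X ** S) \<le> nuclear_norm (X ** T) + c * nuclear_norm X"
proof -
  have "X ** S = X ** T + X ** (S - T)" by (simp add: matrix_add_ldistrib[symmetric])
  then have "nuclear_norm (X ** S) \<le> nuclear_norm (X ** T) + nuclear_norm (X ** (S - T))"
    by (simp only: nuclear_norm_triangle)
  also have "nuclear_norm (X ** (S - T)) \<le> c * nuclear_norm X"
    by (rule nuclear_norm_mult_right_le[OF c ST])
  finally show ?thesis by simp
qed

lemma frob_norm_sq: "(frob_norm X)\<^sup>2 = trace (X ** transpose X)"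
proof -
  have "(frob_norm X)\<^sup>2 = (\<Sum>i\<in>UNIV. \<Sum>j\<in>UNIV. (X $ i $ j)\<^sup>2)"
    unfolding frob_norm_def by (simp add: sum_nonneg)
  also have "\<dots> = trace (X ** transpose X)"
    by (simp add: trace_def matrix_matrix_mult_def transpose_def power2_eq_square)
  finally show ?thesis .
qed

lemma psd_matrix_transpose_mult: "psd_matrix (transpose X ** X)"
  using psd_matrix_mult_transpose[of "transpose X"] by simp

lemma nuclear_norm_mult_transpose_eq:
  "nuclear_norm (X ** transpose Y) = nuclear_norm (X ** psd_sqrt (transpose Y ** Y))"
proof -
  define S where "S = psd_sqrt (transpose Y ** Y)"
  have S: "psd_matrix S" "S ** S = transpose Y ** Y"
    unfolding S_def using psd_matrix_psd_sqrt psd_sqrt_square psd_matrix_transpose_mult by blast+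
  have "(X ** transpose Y) ** transpose (X ** transpose Y) = X ** (S ** S) ** transpose X"
    by (simp add: S(2) matrix_transpose_mul matrix_mul_assoc)
  also have "\<dots> = (X ** S) ** transpose (X ** S)"
    using psd_matrix_symmetric[OF S(1)] by (simp add: matrix_transpose_mul matrix_mul_assoc)
  finally show ?thesis unfolding nuclear_norm_def S_def by simp
qed

lemma nuclear_norm_mult_psd_sqrt_gram:
  "nuclear_norm (X ** psd_sqrt (transpose X ** X)) = (frob_norm X)\<^sup>2"
proof -
  define S where "S = psd_sqrt (transpose X ** X)"
  have S: "psd_matrix S" "S ** S = transpose X ** X"
    unfolding S_def using psd_matrix_psd_sqrt psd_sqrt_square psd_matrix_transpose_mult by blast+
  have "(X ** S) ** transpose (X ** S) = X ** (S ** S) ** transpose X"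
    using psd_matrix_symmetric[OF S(1)] by (simp add: matrix_transpose_mul matrix_mul_assoc)
  also have "\<dots> = (X ** transpose X) ** (X ** transpose X)"
    by (simp add: S(2) matrix_mul_assoc)
  finally have "psd_sqrt ((X ** S) ** transpose (X ** S)) = X ** transpose X"
    using psd_sqrt_unique[OF psd_matrix_mult_transpose] by simp
  then show ?thesis unfolding nuclear_norm_def frob_norm_sq S_def by simp
qed

lemma nuclear_norm_mult_transpose_frob_norm_diff:
  fixes A :: "real^'r^'m" and B :: "real^'r^'n"
  shows "\<bar>nuclear_norm (A ** transpose B) - (frob_norm A)\<^sup>2\<bar>
           \<le> sqrt (nuclear_norm (transpose A ** A - transpose B ** B)) * nuclear_norm A"
proof -
  define P where "P = transpose A ** A"
  define Q where "Q = transpose B ** B"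
  define d where "d = sqrt (nuclear_norm (P - Q))"
  have P: "psd_matrix P" and Q: "psd_matrix Q"
    unfolding P_def Q_def by (rule psd_matrix_transpose_mult)+
  have d: "0 \<le> d" unfolding d_def using nuclear_norm_nonneg by simp
  have "nuclear_norm (Q - P) = nuclear_norm (P - Q)"
    using nuclear_norm_uminus[of "P - Q"] by simp
  then have PQ: "norm ((psd_sqrt P - psd_sqrt Q) *v v) \<le> d * norm v"
    and QP: "norm ((psd_sqrt Q - psd_sqrt P) *v v) \<le> d * norm v" for v
    unfolding d_def using norm_psd_sqrt_diff_mult_vec_le[OF P Q] norm_psd_sqrt_diff_mult_vec_le[OF Q P]
    by simp_all
  have "nuclear_norm (A ** transpose B) = nuclear_norm (A ** psd_sqrt Q)"
    unfolding Q_def by (rule nuclear_norm_mult_transpose_eq)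
  moreover have "(frob_norm A)\<^sup>2 = nuclear_norm (A ** psd_sqrt P)"
    unfolding P_def by (rule nuclear_norm_mult_psd_sqrt_gram[symmetric])
  moreover have "nuclear_norm (A ** psd_sqrt P) \<le> nuclear_norm (A ** psd_sqrt Q) + d * nuclear_norm A"
    by (rule nuclear_norm_mult_diff_le[OF d PQ])
  moreover have "nuclear_norm (A ** psd_sqrt Q) \<le> nuclear_norm (A ** psd_sqrt P) + d * nuclear_norm A"
    by (rule nuclear_norm_mult_diff_le[OF d QP])
  ultimately show ?thesis unfolding d_def P_def Q_def by linarith
qed

lemma nuclear_norm_mult_transpose_frob_norm_diff':
  fixes A :: "real^'r^'m" and B :: "real^'r^'n"
  shows "\<bar>nuclear_norm (A ** transpose B) - (frob_norm B)\<^sup>2\<bar>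
           \<le> sqrt (nuclear_norm (transpose A ** A - transpose B ** B)) * nuclear_norm B"
proof -
  have "nuclear_norm (B ** transpose A) = nuclear_norm (A ** transpose B)"
    using nuclear_norm_transpose[of "A ** transpose B"] by (simp add: matrix_transpose_mul)
  moreover have "nuclear_norm (transpose B ** B - transpose A ** A)
      = nuclear_norm (transpose A ** A - transpose B ** B)"
    using nuclear_norm_uminus[of "transpose A ** A - transpose B ** B"] by simp
  ultimately show ?thesis using nuclear_norm_mult_transpose_frob_norm_diff[of B A] by simp
qed

lemma abs_diff_midpoint_le:
  fixes x a b :: real
  shows "\<bar>x - (a + b) / 2\<bar> \<le> (\<bar>x - a\<bar> + \<bar>x - b\<bar>) / 2"
proof -
  have "\<bar>x - (a + b) / 2\<bar> = \<bar>(x - a) + (x - b)\<bar> / 2" by (simp add: field_simps)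
  also have "\<dots> \<le> (\<bar>x - a\<bar> + \<bar>x - b\<bar>) / 2" by (simp add: abs_triangle_ineq divide_right_mono)
  finally show ?thesis .
qed

theorem proposition3:
  fixes A :: "real^'r^'m" and B :: "real^'r^'n"
  assumes "CARD('r) \<le> CARD('m)" and "CARD('r) \<le> CARD('n)"
  shows "\<bar>nuclear_norm (A ** transpose B) - (frob_norm A)\<^sup>2\<bar>
           \<le> sqrt (nuclear_norm (transpose A ** A - transpose B ** B)) * nuclear_norm A
       \<and> \<bar>nuclear_norm (A ** transpose B) - ((frob_norm A)\<^sup>2 + (frob_norm B)\<^sup>2) / 2\<bar>
           \<le> sqrt (nuclear_norm (transpose A ** A - transpose B ** B))
               * ((nuclear_norm A + nuclear_norm B) / 2)"
proof -
  define s where "s = sqrt (nuclear_norm (transpose A ** A - transpose B ** B))"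
  have A: "\<bar>nuclear_norm (A ** transpose B) - (frob_norm A)\<^sup>2\<bar> \<le> s * nuclear_norm A"
    unfolding s_def by (rule nuclear_norm_mult_transpose_frob_norm_diff)
  have B: "\<bar>nuclear_norm (A ** transpose B) - (frob_norm B)\<^sup>2\<bar> \<le> s * nuclear_norm B"
    unfolding s_def by (rule nuclear_norm_mult_transpose_frob_norm_diff')
  have "\<bar>nuclear_norm (A ** transpose B) - ((frob_norm A)\<^sup>2 + (frob_norm B)\<^sup>2) / 2\<bar>
      \<le> (\<bar>nuclear_norm (A ** transpose B) - (frob_norm A)\<^sup>2\<bar>
          + \<bar>nuclear_norm (A ** transpose B) - (frob_norm B)\<^sup>2\<bar>) / 2"
    by (rule abs_diff_midpoint_le)
  also have "\<dots> \<le> (s * nuclear_norm A + s * nuclear_norm B) / 2" using A B by simp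
  also have "\<dots> = s * ((nuclear_norm A + nuclear_norm B) / 2)" by (simp add: distrib_left)
  finally show ?thesis using A unfolding s_def by blast
qed

end
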